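(* Let $\Bbbk$ be a field, let $\mathrm{Var}$ be a variety of $\Bbbk$-algebras with one binary product defined by a set of polylinear identities. Let $X$ be a set, $\dot X=\{\dot x\mid x\in X\}$ a disjoint copy of $X$, $F=\mathrm{Var}\langle X\cup\dot X\rangle$ the free $\mathrm{Var}$-algebra on $X\cup\dot X$, and $\varphi:F\to F$ the algebra homomorphism with $\varphi(x)=\varphi(\dot x)=x$ for $x\in X$. Equip $F$ with the operations $f\vdash g=\varphi(f)g$, $f\dashv g=f\varphi(g)$, $f\perp g=fg$, obtaining the system $F^{(3)}$. Then the subalgebra $V$ of $F^{(3)}$ generated by $\dot X$ (i.e. the smallest subspace containing $\dot X$ and closed under $\vdash,\dashv,\perp$) coincides with the subspace $W$ of $F$ spanned by all monomials $u$ with $\deg_{\dot X}u>0$.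
   Context: Monomials of $F$ are the images of nonassociative words (bracketed products) in the alphabet $X\cup\dot X$; since the defining identities of $\mathrm{Var}$ are polylinear, $F$ is graded by degree in each letter, and $\deg_{\dot X}u$ denotes the total number of occurrences of letters from $\dot X$ in the monomial $u$. *)

theory Defs
  imports Main
begin

datatype 'a mag = Gen 'a | Mul "'a mag" "'a mag"

fun letters :: "'a mag \<Rightarrow> 'a set" where
  "letters (Gen a) = {a}"
| "letters (Mul u v) = letters u \<union> letters v"

fun cnt :: "'a \<Rightarrow> 'a mag \<Rightarrow> nat" where
  "cnt b (Gen a) = (if a = b then 1 else 0)"
| "cnt b (Mul u v) = cnt b u + cnt b v"

text \<open>Alphabet X \<union> X-dot: Inl x stands for x, Inr x for x-dot.
  degdot w is the number of dotted letters in w.\<close>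
fun degdot :: "('x + 'x) mag \<Rightarrow> nat" where
  "degdot (Gen (Inl x)) = 0"
| "degdot (Gen (Inr x)) = 1"
| "degdot (Mul u v) = degdot u + degdot v"

definition alph :: "'x set \<Rightarrow> ('x + 'x) set" where
  "alph X = Inl ` X \<union> Inr ` X"

text \<open>Elements of the free nonassociative algebra: finitely supported
  coefficient functions on words.\<close>
definition supp :: "('a mag \<Rightarrow> 'k::zero) \<Rightarrow> 'a mag set" where
  "supp p = {w. p w \<noteq> 0}"

definition FA :: "'a set \<Rightarrow> ('a mag \<Rightarrow> 'k::zero) set" where
  "FA Al = {p. finite (supp p) \<and> (\<forall>w\<in>supp p. letters w \<subseteq> Al)}"

definition fzero :: "'a mag \<Rightarrow> 'k::zero" where "fzero = (\<lambda>_. 0)"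
definition fadd :: "('a mag \<Rightarrow> 'k::plus) \<Rightarrow> ('a mag \<Rightarrow> 'k) \<Rightarrow> 'a mag \<Rightarrow> 'k" where
  "fadd p q = (\<lambda>w. p w + q w)"
definition fsub :: "('a mag \<Rightarrow> 'k::minus) \<Rightarrow> ('a mag \<Rightarrow> 'k) \<Rightarrow> 'a mag \<Rightarrow> 'k" where
  "fsub p q = (\<lambda>w. p w - q w)"
definition fsmul :: "'k::times \<Rightarrow> ('a mag \<Rightarrow> 'k) \<Rightarrow> 'a mag \<Rightarrow> 'k" where
  "fsmul c p = (\<lambda>w. c * p w)"
definition mon :: "'a mag \<Rightarrow> 'a mag \<Rightarrow> 'k::{zero,one}" where
  "mon w = (\<lambda>u. if u = w then 1 else 0)"

definition fmul :: "('a mag \<Rightarrow> 'k::{zero,times}) \<Rightarrow> ('a mag \<Rightarrow> 'k) \<Rightarrow> 'a mag \<Rightarrow> 'k" where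
  "fmul p q = (\<lambda>w. case w of Gen _ \<Rightarrow> 0 | Mul u v \<Rightarrow> p u * q v)"

fun evalw :: "('v \<Rightarrow> 'a mag \<Rightarrow> 'k::comm_ring_1) \<Rightarrow> 'v mag \<Rightarrow> 'a mag \<Rightarrow> 'k" where
  "evalw \<sigma> (Gen v) = \<sigma> v"
| "evalw \<sigma> (Mul u w) = fmul (evalw \<sigma> u) (evalw \<sigma> w)"

definition eval :: "('v \<Rightarrow> 'a mag \<Rightarrow> 'k::comm_ring_1) \<Rightarrow> ('v mag \<Rightarrow> 'k) \<Rightarrow> 'a mag \<Rightarrow> 'k" where
  "eval \<sigma> p = (\<lambda>w. \<Sum>u\<in>supp p. p u * evalw \<sigma> u w)"

definition polylinear :: "(nat mag \<Rightarrow> 'k::zero) \<Rightarrow> bool" where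
  "polylinear p \<longleftrightarrow> finite (supp p) \<and>
     (\<exists>S. \<forall>w\<in>supp p. \<forall>v. cnt v w = (if v \<in> S then 1 else 0))"

text \<open>The verbal (T-)ideal of the free nonassociative algebra on Al
  determined by the identities Ids: the ideal generated by all values of
  the identities.\<close>
inductive_set Tid :: "(nat mag \<Rightarrow> 'k::field) set \<Rightarrow> 'a set \<Rightarrow> ('a mag \<Rightarrow> 'k) set"
  for Ids :: "(nat mag \<Rightarrow> 'k::field) set" and Al :: "'a set" where
  val: "p \<in> Ids \<Longrightarrow> (\<forall>v. \<sigma> v \<in> FA Al) \<Longrightarrow> eval \<sigma> p \<in> Tid Ids Al"
| zero: "fzero \<in> Tid Ids Al"
| add: "f \<in> Tid Ids Al \<Longrightarrow> g \<in> Tid Ids Al \<Longrightarrow> fadd f g \<in> Tid Ids Al"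
| smul: "f \<in> Tid Ids Al \<Longrightarrow> fsmul c f \<in> Tid Ids Al"
| multl: "f \<in> Tid Ids Al \<Longrightarrow> g \<in> FA Al \<Longrightarrow> fmul g f \<in> Tid Ids Al"
| multr: "f \<in> Tid Ids Al \<Longrightarrow> g \<in> FA Al \<Longrightarrow> fmul f g \<in> Tid Ids Al"

text \<open>Elements of F = Var<X \<union> X-dot> are cosets modulo the T-ideal.\<close>
definition cls :: "(nat mag \<Rightarrow> 'k::field) set \<Rightarrow> 'x set \<Rightarrow> (('x + 'x) mag \<Rightarrow> 'k)
     \<Rightarrow> (('x + 'x) mag \<Rightarrow> 'k) set" where
  "cls Ids X f = {g \<in> FA (alph X). fsub g f \<in> Tid Ids (alph X)}"

definition undot :: "'x + 'x \<Rightarrow> 'x" where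
  "undot a = (case a of Inl x \<Rightarrow> x | Inr x \<Rightarrow> x)"

definition phi :: "(('x + 'x) mag \<Rightarrow> 'k::comm_ring_1) \<Rightarrow> ('x + 'x) mag \<Rightarrow> 'k" where
  "phi f = eval (\<lambda>a. mon (Gen (Inl (undot a)))) f"

text \<open>The subalgebra V of F^(3) generated by X-dot: smallest subspace of F
  containing the dotted generators and closed under the three operations,
  operations on F computed on representatives.\<close>
inductive_set Vsub :: "(nat mag \<Rightarrow> 'k::field) set \<Rightarrow> 'x set \<Rightarrow> (('x + 'x) mag \<Rightarrow> 'k) set set"
  for Ids :: "(nat mag \<Rightarrow> 'k::field) set" and X :: "'x set" where
  gen: "x \<in> X \<Longrightarrow> cls Ids X (mon (Gen (Inr x))) \<in> Vsub Ids X"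
| zero: "cls Ids X fzero \<in> Vsub Ids X"
| add: "C \<in> Vsub Ids X \<Longrightarrow> D \<in> Vsub Ids X \<Longrightarrow> f \<in> C \<Longrightarrow> g \<in> D
          \<Longrightarrow> cls Ids X (fadd f g) \<in> Vsub Ids X"
| smul: "C \<in> Vsub Ids X \<Longrightarrow> f \<in> C \<Longrightarrow> cls Ids X (fsmul c f) \<in> Vsub Ids X"
| vdash: "C \<in> Vsub Ids X \<Longrightarrow> D \<in> Vsub Ids X \<Longrightarrow> f \<in> C \<Longrightarrow> g \<in> D
          \<Longrightarrow> cls Ids X (fmul (phi f) g) \<in> Vsub Ids X"
| dashv: "C \<in> Vsub Ids X \<Longrightarrow> D \<in> Vsub Ids X \<Longrightarrow> f \<in> C \<Longrightarrow> g \<in> D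
          \<Longrightarrow> cls Ids X (fmul f (phi g)) \<in> Vsub Ids X"
| perp: "C \<in> Vsub Ids X \<Longrightarrow> D \<in> Vsub Ids X \<Longrightarrow> f \<in> C \<Longrightarrow> g \<in> D
          \<Longrightarrow> cls Ids X (fmul f g) \<in> Vsub Ids X"

definition Wsub :: "(nat mag \<Rightarrow> 'k::field) set \<Rightarrow> 'x set \<Rightarrow> (('x + 'x) mag \<Rightarrow> 'k) set set" where
  "Wsub Ids X = {cls Ids X f | f. f \<in> FA (alph X) \<and> (\<forall>w\<in>supp f. 0 < degdot w)}"

end

theory Submission
  imports Defs
begin

text \<open>\<open>V \<subseteq> W\<close>: the cosets having a representative spanned by monomials with a dotted letter
  contain the dotted generators and are closed under \<open>\<turnstile>, \<stileturn>, \<bottom>\<close>, because each operation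
  multiplies two such representatives with \<open>\<phi>\<close> applied to at most one of them, and the operations
  are well defined on cosets since the T-ideal is stable under the endomorphism \<open>\<phi>\<close>.

  \<open>W \<subseteq> V\<close>: it suffices to treat a monomial \<open>uv\<close> with a dotted letter. If both factors contain
  dotted letters, \<open>uv = u \<bottom> v\<close>; if \<open>u\<close> contains none, \<open>uv = \<phi>(u') v = u' \<turnstile> v\<close>, where \<open>u'\<close> is
  \<open>u\<close> with every letter dotted and is itself a \<open>\<bottom>\<close>-product of dotted generators; symmetrically
  with \<open>\<stileturn>\<close> if \<open>v\<close> contains none.\<close>

lemma supp_fadd_subset: "supp (fadd f g :: _ \<Rightarrow> 'k::comm_monoid_add) \<subseteq> supp f \<union> supp g"
  by (auto simp: supp_def fadd_def)

lemma supp_fsmul_subset: "supp (fsmul c f :: _ \<Rightarrow> 'k::mult_zero) \<subseteq> supp f"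
  by (auto simp: supp_def fsmul_def)

lemma supp_fmul_subset:
  "supp (fmul p q :: _ \<Rightarrow> 'k::mult_zero) \<subseteq> (\<lambda>(a, b). Mul a b) ` (supp p \<times> supp q)"
proof
  fix w assume "w \<in> supp (fmul p q)"
  then show "w \<in> (\<lambda>(a, b). Mul a b) ` (supp p \<times> supp q)"
    by (cases w) (auto simp: supp_def fmul_def image_iff)
qed

lemma supp_mon [simp]: "supp (mon w :: _ \<Rightarrow> 'k::zero_neq_one) = {w}"
  by (auto simp: supp_def mon_def)

lemma FA_subset: "g \<in> FA Al \<Longrightarrow> supp f \<subseteq> supp g \<Longrightarrow> f \<in> FA Al"
  by (auto simp: FA_def dest: finite_subset)

lemma FA_fzero: "fzero \<in> FA Al"
  by (simp add: FA_def fzero_def supp_def)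

lemma FA_fadd: "f \<in> FA Al \<Longrightarrow> g \<in> FA Al \<Longrightarrow> fadd f (g :: _ \<Rightarrow> 'k::comm_monoid_add) \<in> FA Al"
  using supp_fadd_subset[of f g] by (auto simp: FA_def dest: finite_subset)

lemma FA_fsmul: "f \<in> FA Al \<Longrightarrow> fsmul c (f :: _ \<Rightarrow> 'k::mult_zero) \<in> FA Al"
  by (rule FA_subset[OF _ supp_fsmul_subset])

lemma FA_fmul:
  assumes "p \<in> FA Al" "q \<in> FA Al"
  shows "fmul p (q :: _ \<Rightarrow> 'k::mult_zero) \<in> FA Al"
proof -
  have "finite ((\<lambda>(a, b). Mul a b) ` (supp p \<times> supp q))"
    using assms by (simp add: FA_def)
  moreover have "\<forall>w\<in>(\<lambda>(a, b). Mul a b) ` (supp p \<times> supp q). letters w \<subseteq> Al"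
    using assms by (auto simp: FA_def)
  ultimately show ?thesis
    using supp_fmul_subset[of p q] unfolding FA_def by (blast intro: finite_subset)
qed

lemma mon_in_FA: "letters w \<subseteq> Al \<Longrightarrow> (mon w :: _ \<Rightarrow> 'k::zero_neq_one) \<in> FA Al"
  by (simp add: FA_def)

lemma fmul_mon: "fmul (mon u) (mon v) = (mon (Mul u v) :: _ \<Rightarrow> 'k::{mult_zero,monoid_mult})"
  by (rule ext) (simp add: fmul_def mon_def split: mag.splits)

lemma fsub_fmul_fmul:
  "fsub (fmul f g) (fmul h k)
    = fadd (fmul (fsub f h) g) (fmul h (fsub g k) :: _ \<Rightarrow> 'k::comm_ring_1)"
  by (rule ext) (simp add: fsub_def fadd_def fmul_def algebra_simps split: mag.splits)

lemma eval_eq_sum_superset: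
  assumes "finite S" "supp p \<subseteq> S"
  shows "eval \<sigma> p w = (\<Sum>u\<in>S. p u * evalw \<sigma> u w)"
  unfolding eval_def by (rule sum.mono_neutral_left) (use assms in \<open>auto simp: supp_def\<close>)

lemma eval_infinite_supp: "infinite (supp p) \<Longrightarrow> eval \<sigma> p = fzero"
  by (auto simp: eval_def fzero_def)

lemma eval_fzero: "eval \<sigma> fzero = fzero"
  by (simp add: eval_def fzero_def supp_def)

lemma supp_eval_subset: "supp (eval \<sigma> p) \<subseteq> (\<Union>u\<in>supp p. supp (evalw \<sigma> u))"
proof
  fix w assume "w \<in> supp (eval \<sigma> p)"
  then have "(\<Sum>u\<in>supp p. p u * evalw \<sigma> u w) \<noteq> 0"
    unfolding supp_def eval_def by simp
  then obtain u where "u \<in> supp p" "p u * evalw \<sigma> u w \<noteq> 0"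
    by (meson sum.neutral)
  then show "w \<in> (\<Union>u\<in>supp p. supp (evalw \<sigma> u))"
    by (auto simp: supp_def)
qed

lemma finite_supp_evalw: "(\<And>v. finite (supp (\<sigma> v))) \<Longrightarrow> finite (supp (evalw \<sigma> u))"
  by (induction u) (auto intro: finite_subset[OF supp_fmul_subset])

lemma evalw_in_FA: "(\<And>a. a \<in> letters u \<Longrightarrow> \<sigma> a \<in> FA Al) \<Longrightarrow> evalw \<sigma> u \<in> FA Al"
  by (induction u) (auto intro: FA_fmul)

lemma eval_in_FA:
  assumes "\<And>u. u \<in> supp p \<Longrightarrow> evalw \<sigma> u \<in> FA Al"
  shows "eval \<sigma> p \<in> FA Al"
proof (cases "finite (supp p)")
  case True
  with assms have "(\<Union>u\<in>supp p. supp (evalw \<sigma> u)) \<subseteq> {w. letters w \<subseteq> Al}"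
    and "finite (\<Union>u\<in>supp p. supp (evalw \<sigma> u))"
    by (auto simp: FA_def)
  with supp_eval_subset show ?thesis
    unfolding FA_def by (blast intro: finite_subset)
qed (simp add: eval_infinite_supp FA_fzero)

lemma eval_in_FA_subst:
  "f \<in> FA Al \<Longrightarrow> (\<And>a. a \<in> Al \<Longrightarrow> \<tau> a \<in> FA Bl) \<Longrightarrow> eval \<tau> f \<in> FA Bl"
  by (rule eval_in_FA, rule evalw_in_FA) (auto simp: FA_def)

lemma eval_fsub:
  assumes "finite (supp p)" "finite (supp q)"
  shows "eval \<sigma> (fsub p q) = fsub (eval \<sigma> p) (eval \<sigma> q)"
proof
  fix w
  let ?S = "supp p \<union> supp q"
  have "supp (fsub p q) \<subseteq> ?S" by (auto simp: supp_def fsub_def)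
  then show "eval \<sigma> (fsub p q) w = fsub (eval \<sigma> p) (eval \<sigma> q) w"
    unfolding fsub_def using assms
    by (simp add: eval_eq_sum_superset[where S = ?S] fsub_def sum_subtractf left_diff_distrib)
qed

lemma eval_fadd:
  assumes "finite (supp p)" "finite (supp q)"
  shows "eval \<sigma> (fadd p q) = fadd (eval \<sigma> p) (eval \<sigma> q)"
proof
  fix w
  let ?S = "supp p \<union> supp q"
  have "supp (fadd p q) \<subseteq> ?S" by (auto simp: supp_def fadd_def)
  then show "eval \<sigma> (fadd p q) w = fadd (eval \<sigma> p) (eval \<sigma> q) w"
    unfolding fadd_def using assms
    by (simp add: eval_eq_sum_superset[where S = ?S] fadd_def sum.distrib distrib_right)
qed

lemma eval_fsmul: "finite (supp p) \<Longrightarrow> eval \<sigma> (fsmul c p) = fsmul c (eval \<sigma> p)"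
  using supp_fsmul_subset[of c p]
  by (intro ext) (simp add: eval_eq_sum_superset[where S = "supp p"] fsmul_def
      sum_distrib_left mult.assoc)

lemma eval_fmul:
  fixes p q :: "'a mag \<Rightarrow> 'k::comm_ring_1"
  assumes fp: "finite (supp p)" and fq: "finite (supp q)"
  shows "eval \<tau> (fmul p q) = fmul (eval \<tau> p) (eval \<tau> q)"
proof
  fix w
  let ?M = "\<lambda>(a, b). Mul a b" and ?S = "supp p \<times> supp q"
  have "eval \<tau> (fmul p q) w = (\<Sum>x\<in>?M ` ?S. fmul p q x * evalw \<tau> x w)"
    by (rule eval_eq_sum_superset) (use fp fq supp_fmul_subset in auto)
  also have "\<dots> = (\<Sum>(a, b)\<in>?S. p a * q b * fmul (evalw \<tau> a) (evalw \<tau> b) w)"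
    by (subst sum.reindex) (auto simp: inj_on_def fmul_def intro!: sum.cong)
  also have "\<dots> = fmul (eval \<tau> p) (eval \<tau> q) w"
  proof (cases w)
    case (Mul c d)
    have "fmul (eval \<tau> p) (eval \<tau> q) w
        = (\<Sum>a\<in>supp p. p a * evalw \<tau> a c) * (\<Sum>b\<in>supp q. q b * evalw \<tau> b d)"
      by (simp add: Mul fmul_def eval_def)
    also have "\<dots> = (\<Sum>(a, b)\<in>?S. (p a * evalw \<tau> a c) * (q b * evalw \<tau> b d))"
      by (simp add: sum_product sum.cartesian_product)
    finally show ?thesis by (simp add: Mul fmul_def algebra_simps)
  qed (simp add: fmul_def)
  finally show "eval \<tau> (fmul p q) w = fmul (eval \<tau> p) (eval \<tau> q) w" .
qed

lemma eval_evalw: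
  fixes \<sigma> :: "'v \<Rightarrow> 'a mag \<Rightarrow> 'k::comm_ring_1"
  assumes "\<And>v. finite (supp (\<sigma> v))"
  shows "eval \<tau> (evalw \<sigma> u) = evalw (\<lambda>v. eval \<tau> (\<sigma> v)) u"
  by (induction u) (auto simp: eval_fmul finite_supp_evalw assms)

lemma eval_eval:
  fixes \<sigma> :: "'v \<Rightarrow> 'a mag \<Rightarrow> 'k::comm_ring_1"
  assumes fp: "finite (supp p)" and fs: "\<And>v. finite (supp (\<sigma> v))"
  shows "eval \<tau> (eval \<sigma> p) = eval (\<lambda>v. eval \<tau> (\<sigma> v)) p"
proof
  fix w
  let ?T = "\<Union>u\<in>supp p. supp (evalw \<sigma> u)"
  have fT: "finite ?T" using fp finite_supp_evalw[OF fs] by auto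
  have "eval \<tau> (eval \<sigma> p) w = (\<Sum>v\<in>?T. eval \<sigma> p v * evalw \<tau> v w)"
    by (rule eval_eq_sum_superset[OF fT supp_eval_subset])
  also have "\<dots> = (\<Sum>v\<in>?T. \<Sum>u\<in>supp p. p u * (evalw \<sigma> u v * evalw \<tau> v w))"
    by (simp add: eval_def sum_distrib_right mult.assoc)
  also have "\<dots> = (\<Sum>u\<in>supp p. p u * (\<Sum>v\<in>?T. evalw \<sigma> u v * evalw \<tau> v w))"
    by (subst sum.swap) (simp add: sum_distrib_left)
  also have "\<dots> = (\<Sum>u\<in>supp p. p u * eval \<tau> (evalw \<sigma> u) w)"
    by (intro sum.cong refl, subst eval_eq_sum_superset[OF fT]) auto
  also have "\<dots> = eval (\<lambda>v. eval \<tau> (\<sigma> v)) p w"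
    by (simp add: eval_def[of _ p] eval_evalw[OF fs])
  finally show "eval \<tau> (eval \<sigma> p) w = eval (\<lambda>v. eval \<tau> (\<sigma> v)) p w" .
qed

subsection \<open>The T-ideal and the endomorphism \<open>\<phi>\<close>\<close>

lemma finite_supp_FA: "f \<in> FA Al \<Longrightarrow> finite (supp f)"
  by (simp add: FA_def)

lemma Tid_subset_FA: "f \<in> Tid Ids Al \<Longrightarrow> f \<in> FA Al"
proof (induction rule: Tid.induct)
  case (val p \<sigma>)
  then show ?case by (intro eval_in_FA evalw_in_FA) blast
qed (simp_all add: FA_fzero FA_fadd FA_fsmul FA_fmul)

lemma finite_supp_Tid: "f \<in> Tid Ids Al \<Longrightarrow> finite (supp f)"
  by (intro finite_supp_FA Tid_subset_FA)

lemma eval_in_Tid: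
  assumes "f \<in> Tid Ids Al" and \<tau>: "\<And>a. a \<in> Al \<Longrightarrow> \<tau> a \<in> FA Al"
  shows "eval \<tau> f \<in> Tid Ids Al"
  using assms(1)
proof (induction rule: Tid.induct)
  case (val p \<sigma>)
  show ?case
  proof (cases "finite (supp p)")
    case True
    have "eval \<tau> (eval \<sigma> p) = eval (\<lambda>v. eval \<tau> (\<sigma> v)) p"
      using val(2) by (intro eval_eval True finite_supp_FA) blast
    also have "\<dots> \<in> Tid Ids Al"
      using val eval_in_FA_subst \<tau> by (intro Tid.val) blast+
    finally show ?thesis .
  qed (simp add: eval_infinite_supp eval_fzero Tid.zero)
next
  case zero
  show ?case by (simp add: eval_fzero Tid.zero)
next
  case (add f g)
  then show ?case by (simp add: eval_fadd finite_supp_Tid Tid.add)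
next
  case (smul f c)
  then show ?case by (simp add: eval_fsmul finite_supp_Tid Tid.smul)
next
  case (multl f g)
  then have "eval \<tau> g \<in> FA Al" by (blast intro: eval_in_FA_subst \<tau>)
  with multl show ?case
    by (simp add: eval_fmul finite_supp_Tid finite_supp_FA Tid.multl)
next
  case (multr f g)
  then have "eval \<tau> g \<in> FA Al" by (blast intro: eval_in_FA_subst \<tau>)
  with multr show ?case
    by (simp add: eval_fmul finite_supp_Tid finite_supp_FA Tid.multr)
qed

lemma mon_undot_in_FA:
  "a \<in> alph X \<Longrightarrow> (mon (Gen (Inl (undot a))) :: _ \<Rightarrow> 'k::zero_neq_one) \<in> FA (alph X)"
  by (rule mon_in_FA) (auto simp: alph_def undot_def)

lemma phi_in_FA: "f \<in> FA (alph X) \<Longrightarrow> phi (f :: _ \<Rightarrow> 'k::comm_ring_1) \<in> FA (alph X)"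
  unfolding phi_def by (erule eval_in_FA_subst) (rule mon_undot_in_FA)

lemma phi_in_Tid: "f \<in> Tid Ids (alph X) \<Longrightarrow> phi f \<in> Tid Ids (alph X)"
  unfolding phi_def by (erule eval_in_Tid) (rule mon_undot_in_FA)

lemma phi_fsub: "f \<in> FA Al \<Longrightarrow> g \<in> FA Al \<Longrightarrow> phi (fsub f g) = fsub (phi f) (phi g)"
  unfolding phi_def by (simp add: eval_fsub finite_supp_FA)

lemma phi_mon: "phi (mon u) = (mon (map_mag (\<lambda>a. Inl (undot a)) u) :: _ \<Rightarrow> 'k::comm_ring_1)"
proof -
  have "evalw (\<lambda>a. mon (Gen (Inl (undot a)))) u
      = (mon (map_mag (\<lambda>a. Inl (undot a)) u) :: _ \<Rightarrow> 'k)"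
    by (induction u) (simp_all add: fmul_mon)
  moreover have "(mon u :: _ \<Rightarrow> 'k) u = 1" by (simp add: mon_def)
  ultimately show ?thesis
    unfolding phi_def eval_def supp_mon by simp
qed

lemma mem_cls: "f \<in> cls Ids X h \<longleftrightarrow> f \<in> FA (alph X) \<and> fsub f h \<in> Tid Ids (alph X)"
  by (simp add: cls_def)

lemma self_mem_cls: "f \<in> FA (alph X) \<Longrightarrow> f \<in> cls Ids X f"
  by (simp add: mem_cls fsub_def Tid.zero[unfolded fzero_def])

lemma cls_eq_of_mem:
  fixes Ids :: "(nat mag \<Rightarrow> 'k::field) set"
  assumes ab: "a \<in> cls Ids X b"
  shows "cls Ids X a = cls Ids X b"
proof -
  have fsub_via: "fsub g c = fadd (fsub g d) (fsub d c)" for g c d :: "_ \<Rightarrow> 'k"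
    by (simp add: fsub_def fadd_def)
  have "fsub a b \<in> Tid Ids (alph X)" using ab by (simp add: mem_cls)
  moreover have "fsub b a = fsmul (-1) (fsub a b)" by (simp add: fsub_def fsmul_def)
  ultimately have "fsub b a \<in> Tid Ids (alph X)" by (simp add: Tid.smul)
  with \<open>fsub a b \<in> Tid Ids (alph X)\<close> show ?thesis
    unfolding cls_def
    by (intro Collect_cong conj_cong refl iffI)
      (subst fsub_via, erule Tid.add, assumption)+
qed

lemma fadd_mem_cls:
  fixes Ids :: "(nat mag \<Rightarrow> 'k::field) set"
  assumes "f \<in> cls Ids X h" "g \<in> cls Ids X k"
  shows "fadd f g \<in> cls Ids X (fadd h k)"
proof -
  have "fsub (fadd f g) (fadd h k) = fadd (fsub f h) (fsub g k)"
    by (simp add: fsub_def fadd_def algebra_simps)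
  with assms show ?thesis by (simp add: mem_cls FA_fadd Tid.add)
qed

lemma fsmul_mem_cls:
  fixes Ids :: "(nat mag \<Rightarrow> 'k::field) set"
  assumes "f \<in> cls Ids X h"
  shows "fsmul c f \<in> cls Ids X (fsmul c h)"
proof -
  have "fsub (fsmul c f) (fsmul c h) = fsmul c (fsub f h)"
    by (simp add: fsub_def fsmul_def algebra_simps)
  with assms show ?thesis by (simp add: mem_cls FA_fsmul Tid.smul)
qed

lemma fmul_mem_cls:
  fixes Ids :: "(nat mag \<Rightarrow> 'k::field) set"
  assumes f: "f \<in> cls Ids X h" and g: "g \<in> cls Ids X k" and h: "h \<in> FA (alph X)"
  shows "fmul f g \<in> cls Ids X (fmul h k)"
proof -
  from f g have "f \<in> FA (alph X)" "g \<in> FA (alph X)"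
    and fh: "fsub f h \<in> Tid Ids (alph X)" and gk: "fsub g k \<in> Tid Ids (alph X)"
    by (simp_all add: mem_cls)
  have "fsub (fmul f g) (fmul h k) = fadd (fmul (fsub f h) g) (fmul h (fsub g k))"
    by (rule fsub_fmul_fmul)
  also have "\<dots> \<in> Tid Ids (alph X)"
    by (rule Tid.add[OF Tid.multr[OF fh \<open>g \<in> FA (alph X)\<close>] Tid.multl[OF gk h]])
  finally show ?thesis
    using FA_fmul[OF \<open>f \<in> FA (alph X)\<close> \<open>g \<in> FA (alph X)\<close>] by (simp add: mem_cls)
qed

lemma phi_mem_cls:
  assumes f: "f \<in> cls Ids X h" and h: "h \<in> FA (alph X)"
  shows "phi f \<in> cls Ids X (phi h)"
proof -
  from f have fA: "f \<in> FA (alph X)" and fh: "fsub f h \<in> Tid Ids (alph X)"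
    by (simp_all add: mem_cls)
  have "fsub (phi f) (phi h) \<in> Tid Ids (alph X)"
    unfolding phi_fsub[OF fA h, symmetric] by (rule phi_in_Tid[OF fh])
  with phi_in_FA[OF fA] show ?thesis by (simp add: mem_cls)
qed

subsection \<open>\<open>V \<subseteq> W\<close>\<close>

definition dotted_poly :: "'x set \<Rightarrow> (('x + 'x) mag \<Rightarrow> 'k::zero) \<Rightarrow> bool" where
  "dotted_poly X f \<longleftrightarrow> f \<in> FA (alph X) \<and> (\<forall>w\<in>supp f. 0 < degdot w)"

lemma dotted_poly_FA: "dotted_poly X f \<Longrightarrow> f \<in> FA (alph X)"
  by (simp add: dotted_poly_def)

lemma dotted_poly_fzero: "dotted_poly X fzero"
  using FA_fzero by (simp add: dotted_poly_def fzero_def supp_def)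

lemma dotted_poly_mon:
  "letters w \<subseteq> alph X \<Longrightarrow> 0 < degdot w \<Longrightarrow> dotted_poly X (mon w :: _ \<Rightarrow> 'k::zero_neq_one)"
  by (simp add: dotted_poly_def mon_in_FA)

lemma dotted_poly_fadd:
  "dotted_poly X f \<Longrightarrow> dotted_poly X g \<Longrightarrow> dotted_poly X (fadd f g :: _ \<Rightarrow> 'k::comm_monoid_add)"
  using supp_fadd_subset[of f g] by (auto simp: dotted_poly_def FA_fadd)

lemma dotted_poly_fsmul: "dotted_poly X f \<Longrightarrow> dotted_poly X (fsmul c f :: _ \<Rightarrow> 'k::mult_zero)"
  using supp_fsmul_subset[of c f] by (auto simp: dotted_poly_def FA_fsmul)

lemma dotted_poly_fmul_left:
  "dotted_poly X f \<Longrightarrow> g \<in> FA (alph X) \<Longrightarrow> dotted_poly X (fmul f g :: _ \<Rightarrow> 'k::mult_zero)"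
  using supp_fmul_subset[of f g] by (fastforce simp: dotted_poly_def FA_fmul)

lemma dotted_poly_fmul_right:
  "f \<in> FA (alph X) \<Longrightarrow> dotted_poly X g \<Longrightarrow> dotted_poly X (fmul f g :: _ \<Rightarrow> 'k::mult_zero)"
  using supp_fmul_subset[of f g] by (fastforce simp: dotted_poly_def FA_fmul)

lemma Wsub_eq_image: "Wsub Ids X = cls Ids X ` {h. dotted_poly X h}"
  by (auto simp: Wsub_def dotted_poly_def)

lemma cls_in_Wsub: "dotted_poly X h \<Longrightarrow> cls Ids X h \<in> Wsub Ids X"
  by (simp add: Wsub_eq_image)

lemma mem_WsubE:
  assumes "C \<in> Wsub Ids X" "f \<in> C"
  obtains h where "dotted_poly X h" "f \<in> cls Ids X h"
  using assms by (auto simp: Wsub_eq_image)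

lemma cls_in_WsubI: "f \<in> cls Ids X h \<Longrightarrow> dotted_poly X h \<Longrightarrow> cls Ids X f \<in> Wsub Ids X"
  by (simp add: cls_eq_of_mem cls_in_Wsub)

lemma Vsub_subset_Wsub: "Vsub Ids X \<subseteq> Wsub Ids X"
proof
  fix C assume "C \<in> Vsub Ids X"
  then show "C \<in> Wsub Ids X"
  proof (induction rule: Vsub.induct)
    case (gen x)
    then show ?case by (intro cls_in_Wsub dotted_poly_mon) (auto simp: alph_def)
  next
    case zero
    show ?case by (rule cls_in_Wsub[OF dotted_poly_fzero])
  next
    case (add C D f g)
    obtain h k where h: "dotted_poly X h" "f \<in> cls Ids X h" and k: "dotted_poly X k" "g \<in> cls Ids X k"
      by (meson add.IH add.hyps(3,4) mem_WsubE)
    show ?case by (rule cls_in_WsubI[OF fadd_mem_cls[OF h(2) k(2)] dotted_poly_fadd[OF h(1) k(1)]])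
  next
    case (smul C f c)
    obtain h where h: "dotted_poly X h" "f \<in> cls Ids X h"
      by (meson smul.IH smul.hyps(2) mem_WsubE)
    show ?case by (rule cls_in_WsubI[OF fsmul_mem_cls[OF h(2)] dotted_poly_fsmul[OF h(1)]])
  next
    case (vdash C D f g)
    obtain h k where h: "dotted_poly X h" "f \<in> cls Ids X h" and k: "dotted_poly X k" "g \<in> cls Ids X k"
      by (meson vdash.IH vdash.hyps(3,4) mem_WsubE)
    have "h \<in> FA (alph X)" using h(1) by (rule dotted_poly_FA)
    then have "phi h \<in> FA (alph X)" by (rule phi_in_FA)
    have "fmul (phi f) g \<in> cls Ids X (fmul (phi h) k)"
      using phi_mem_cls[OF h(2) \<open>h \<in> FA (alph X)\<close>] k(2) \<open>phi h \<in> FA (alph X)\<close>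
      by (rule fmul_mem_cls)
    moreover have "dotted_poly X (fmul (phi h) k)"
      using \<open>phi h \<in> FA (alph X)\<close> k(1) by (rule dotted_poly_fmul_right)
    ultimately show ?case by (rule cls_in_WsubI)
  next
    case (dashv C D f g)
    obtain h k where h: "dotted_poly X h" "f \<in> cls Ids X h" and k: "dotted_poly X k" "g \<in> cls Ids X k"
      by (meson dashv.IH dashv.hyps(3,4) mem_WsubE)
    have "k \<in> FA (alph X)" using k(1) by (rule dotted_poly_FA)
    then have "phi k \<in> FA (alph X)" by (rule phi_in_FA)
    have "fmul f (phi g) \<in> cls Ids X (fmul h (phi k))"
      using h(2) phi_mem_cls[OF k(2) \<open>k \<in> FA (alph X)\<close>] dotted_poly_FA[OF h(1)]
      by (rule fmul_mem_cls)
    moreover have "dotted_poly X (fmul h (phi k))"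
      using h(1) \<open>phi k \<in> FA (alph X)\<close> by (rule dotted_poly_fmul_left)
    ultimately show ?case by (rule cls_in_WsubI)
  next
    case (perp C D f g)
    obtain h k where h: "dotted_poly X h" "f \<in> cls Ids X h" and k: "dotted_poly X k" "g \<in> cls Ids X k"
      by (meson perp.IH perp.hyps(3,4) mem_WsubE)
    have "fmul f g \<in> cls Ids X (fmul h k)"
      using h(2) k(2) dotted_poly_FA[OF h(1)] by (rule fmul_mem_cls)
    moreover have "dotted_poly X (fmul h k)"
      using h(1) dotted_poly_FA[OF k(1)] by (rule dotted_poly_fmul_left)
    ultimately show ?case by (rule cls_in_WsubI)
  qed
qed

subsection \<open>\<open>W \<subseteq> V\<close>\<close>

lemma Vsub_perp_cls:
  "cls Ids X f \<in> Vsub Ids X \<Longrightarrow> cls Ids X g \<in> Vsub Ids X \<Longrightarrow> f \<in> FA (alph X)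
    \<Longrightarrow> g \<in> FA (alph X) \<Longrightarrow> cls Ids X (fmul f g) \<in> Vsub Ids X"
  by (rule Vsub.perp[OF _ _ self_mem_cls self_mem_cls])

lemma Vsub_vdash_cls:
  "cls Ids X f \<in> Vsub Ids X \<Longrightarrow> cls Ids X g \<in> Vsub Ids X \<Longrightarrow> f \<in> FA (alph X)
    \<Longrightarrow> g \<in> FA (alph X) \<Longrightarrow> cls Ids X (fmul (phi f) g) \<in> Vsub Ids X"
  by (rule Vsub.vdash[OF _ _ self_mem_cls self_mem_cls])

lemma Vsub_dashv_cls:
  "cls Ids X f \<in> Vsub Ids X \<Longrightarrow> cls Ids X g \<in> Vsub Ids X \<Longrightarrow> f \<in> FA (alph X)
    \<Longrightarrow> g \<in> FA (alph X) \<Longrightarrow> cls Ids X (fmul f (phi g)) \<in> Vsub Ids X"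
  by (rule Vsub.dashv[OF _ _ self_mem_cls self_mem_cls])

definition dotted_copy :: "('x + 'x) mag \<Rightarrow> ('x + 'x) mag" where
  "dotted_copy = map_mag (\<lambda>a. Inr (undot a))"

lemma letters_map_mag: "letters (map_mag f u) = f ` letters u"
  by (induction u) auto

lemma letters_dotted_copy: "letters u \<subseteq> alph X \<Longrightarrow> letters (dotted_copy u) \<subseteq> alph X"
  by (auto simp: dotted_copy_def letters_map_mag alph_def undot_def)

lemma phi_mon_dotted_copy:
  assumes "degdot u = 0"
  shows "phi (mon (dotted_copy u)) = (mon u :: _ \<Rightarrow> 'k::comm_ring_1)"
proof -
  have "map_mag (\<lambda>a. Inl (undot a)) u = u"
    using assms by (induction u rule: degdot.induct) (simp_all add: undot_def)
  then show ?thesis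
    by (simp add: phi_mon dotted_copy_def mag.map_comp o_def undot_def)
qed

lemma mon_dotted_copy_in_Vsub:
  fixes Ids :: "(nat mag \<Rightarrow> 'k::field) set"
  shows "letters u \<subseteq> alph X \<Longrightarrow> cls Ids X (mon (dotted_copy u)) \<in> Vsub Ids X"
proof (induction u)
  case (Gen a)
  then have "undot a \<in> X" by (auto simp: alph_def undot_def)
  from Vsub.gen[OF this] show ?case by (simp add: dotted_copy_def)
next
  case (Mul u v)
  then have "letters (dotted_copy u) \<subseteq> alph X" "letters (dotted_copy v) \<subseteq> alph X"
    by (simp_all add: letters_dotted_copy)
  with Mul show ?case
    using Vsub_perp_cls[OF Mul.IH mon_in_FA mon_in_FA]
    by (simp add: fmul_mon dotted_copy_def)
qed

lemma mon_in_Vsub: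
  fixes Ids :: "(nat mag \<Rightarrow> 'k::field) set"
  shows "letters w \<subseteq> alph X \<Longrightarrow> 0 < degdot w \<Longrightarrow> cls Ids X (mon w) \<in> Vsub Ids X"
proof (induction w)
  case (Gen a)
  then obtain x where "a = Inr x" "x \<in> X" by (cases a) (auto simp: alph_def)
  then show ?case by (simp add: Vsub.gen)
next
  case (Mul u v)
  have u: "letters u \<subseteq> alph X" and v: "letters v \<subseteq> alph X" using Mul.prems by auto
  consider "0 < degdot u" "0 < degdot v" | "degdot u = 0" "0 < degdot v" | "0 < degdot u" "degdot v = 0"
    using Mul.prems by fastforce
  then show ?case
  proof cases
    case 1
    then show ?thesis
      using Vsub_perp_cls[OF Mul.IH(1)[OF u] Mul.IH(2)[OF v] mon_in_FA[OF u] mon_in_FA[OF v]]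
      by (simp add: fmul_mon)
  next
    case 2
    then show ?thesis
      using Vsub_vdash_cls[OF mon_dotted_copy_in_Vsub[OF u] Mul.IH(2)[OF v]
          mon_in_FA[OF letters_dotted_copy[OF u]] mon_in_FA[OF v]]
      by (simp add: phi_mon_dotted_copy fmul_mon)
  next
    case 3
    then show ?thesis
      using Vsub_dashv_cls[OF Mul.IH(1)[OF u] mon_dotted_copy_in_Vsub[OF v]
          mon_in_FA[OF u] mon_in_FA[OF letters_dotted_copy[OF v]]]
      by (simp add: phi_mon_dotted_copy fmul_mon)
  qed
qed

lemma dotted_poly_in_Vsub:
  fixes Ids :: "(nat mag \<Rightarrow> 'k::field) set"
  assumes "dotted_poly X f"
  shows "cls Ids X f \<in> Vsub Ids X"
proof -
  have "finite (supp f)" by (rule finite_supp_FA[OF dotted_poly_FA[OF assms]])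
  then show ?thesis
    using assms
  proof (induction "supp f" arbitrary: f rule: finite_induct)
    case empty
    then have "f = fzero" by (auto simp: supp_def fzero_def)
    then show ?case by (simp add: Vsub.zero)
  next
    case (insert w S)
    define f' where "f' = f(w := 0)"
    have "supp f' = S" using insert.hyps(2,4) by (auto simp: supp_def f'_def)
    moreover have "dotted_poly X f'"
      using insert.prems \<open>supp f' = S\<close> insert.hyps(1,4)
      by (auto simp: dotted_poly_def FA_def)
    ultimately have f'V: "cls Ids X f' \<in> Vsub Ids X" using insert.hyps(3) by metis
    have w: "letters w \<subseteq> alph X" "0 < degdot w"
      using insert.prems insert.hyps(4) by (auto simp: dotted_poly_def FA_def)
    then have mon_w: "(mon w :: _ \<Rightarrow> 'k) \<in> FA (alph X)" by (simp add: mon_in_FA)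
    have "cls Ids X (fsmul (f w) (mon w)) \<in> Vsub Ids X"
      by (rule Vsub.smul[OF mon_in_Vsub[OF w] self_mem_cls[OF mon_w]])
    then have "cls Ids X (fadd (fsmul (f w) (mon w)) f') \<in> Vsub Ids X"
      using Vsub.add[OF _ f'V self_mem_cls self_mem_cls] FA_fsmul[OF mon_w]
        dotted_poly_FA[OF \<open>dotted_poly X f'\<close>] by blast
    moreover have "fadd (fsmul (f w) (mon w)) f' = f"
      by (rule ext) (simp add: fadd_def fsmul_def mon_def f'_def)
    ultimately show ?case by simp
  qed
qed

theorem lemma3p2:
  fixes Ids :: "(nat mag \<Rightarrow> 'k::field) set" and X :: "'x set"
  assumes "\<forall>p\<in>Ids. polylinear p"
  shows "Vsub Ids X = Wsub Ids X"
proof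
  show "Vsub Ids X \<subseteq> Wsub Ids X" by (rule Vsub_subset_Wsub)
  show "Wsub Ids X \<subseteq> Vsub Ids X"
    unfolding Wsub_eq_image using dotted_poly_in_Vsub by blast
qed

end
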